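(* Let $\beta_2\in(0,1)$, $\epsilon>0$, and let $g_1,g_2,\dots$ be random vectors in $\mathbb{R}^D$ with $\mathbb{E}\|g_t\|^2\le G^2$ for all $t\ge1$. Define $v_0=0$, $v_t=\beta_2v_{t-1}+(1-\beta_2)g_t\odot g_t$ for $t\ge1$. Then for every $T\ge1$, $$\sum_{t=1}^T\mathbb{E}\left[\left\|\frac{g_t}{\sqrt{v_t+\epsilon^2}}\right\|^2\right]\le\frac{D}{1-\beta_2}\left(\log\Big(1+\frac{(1-\beta_2^T)G^2}{\epsilon^2}\Big)-T\log\beta_2\right).$$
   Context: $\odot$, square root, division and addition of a scalar act elementwise; norms are Euclidean. These are the second-moment estimates of RMSprop. *)

theory Defs
  imports "HOL-Probability.Probability"
begin

fun rmsprop_v :: "real \<Rightarrow> (nat \<Rightarrow> real^'d) \<Rightarrow> nat \<Rightarrow> real^'d" where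
  "rmsprop_v \<beta>2 g 0 = 0"
| "rmsprop_v \<beta>2 g (Suc t) =
     (\<chi> i. \<beta>2 * (rmsprop_v \<beta>2 g t $ i) + (1 - \<beta>2) * (g (Suc t) $ i) * (g (Suc t) $ i))"

end

theory Submission
  imports Defs
begin

(* Coordinatewise, the elementary bound 1 - y/x <= ln x - ln y with x = v t + eps^2 and
   y = beta2 * (v (t-1) + eps^2) gives
     (1 - beta2) * (g t)^2 / (v t + eps^2) <= ln (v t + eps^2) - ln (v (t-1) + eps^2) - ln beta2,
   which telescopes to ln (1 + v T / eps^2) - T ln beta2. Bounding this concave logarithm by its
   tangent at C = (1 - beta2^T) G^2 / eps^2 makes the bound affine in v T, and by the recursion the
   expected total second moment (sum over i of v T $ i) is at most (1 - beta2^T) G^2. *)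

lemma rmsprop_v_Suc_nth [simp]:
  "rmsprop_v b g (Suc t) $ i = b * rmsprop_v b g t $ i + (1 - b) * (g (Suc t) $ i)\<^sup>2"
  by (simp add: power2_eq_square mult.assoc)

declare rmsprop_v.simps(2) [simp del]

lemma rmsprop_v_nonneg:
  assumes "0 \<le> b" "b \<le> 1"
  shows "0 \<le> rmsprop_v b g t $ i"
  by (induction t) (use assms in auto)

lemma rmsprop_v_log_telescope:
  fixes b e :: real
  assumes "0 < b" "b \<le> 1" "0 < e"
  shows "(\<Sum>t=1..T. (1 - b) * (g t $ i)\<^sup>2 / (rmsprop_v b g t $ i + e))
           \<le> ln (rmsprop_v b g T $ i + e) - ln e - real T * ln b"
proof (induction T)
  case 0
  then show ?case by simp
next
  case (Suc T)
  define y where "y = rmsprop_v b g T $ i + e"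
  define x where "x = rmsprop_v b g (Suc T) $ i + e"
  have "0 \<le> rmsprop_v b g T $ i" using assms by (simp add: rmsprop_v_nonneg)
  then have y: "0 < y" using assms by (simp add: y_def)
  have x: "0 < x" using assms by (simp add: x_def add_nonneg_pos rmsprop_v_nonneg)
  have "(1 - b) * (g (Suc T) $ i)\<^sup>2 \<le> x - b * y"
    using assms by (simp add: x_def y_def algebra_simps)
  then have "(1 - b) * (g (Suc T) $ i)\<^sup>2 / x \<le> (x - b * y) / x"
    using x by (simp add: divide_right_mono)
  also have "\<dots> \<le> ln x - ln (b * y)"
    using ln_diff_le[of "b * y" x] x y assms by (simp add: field_simps)
  also have "\<dots> = ln x - ln y - ln b"
    using y assms by (simp add: ln_mult)
  finally show ?case
    using Suc by (simp add: x_def y_def ring_distribs)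
qed

lemma norm_rmsprop_normalized_sq:
  assumes "0 \<le> b" "b \<le> 1" "0 \<le> e"
  shows "(norm (\<chi> i. g t $ i / sqrt (rmsprop_v b g t $ i + e)))\<^sup>2
           = (\<Sum>i\<in>UNIV. (g t $ i)\<^sup>2 / (rmsprop_v b g t $ i + e))"
  using assms
  by (simp add: norm_vec_def L2_set_def power_divide add_nonneg_nonneg rmsprop_v_nonneg sum_nonneg)

lemma rmsprop_normalized_sum_le:
  fixes b e C :: real and g :: "nat \<Rightarrow> real^'d"
  assumes "0 < b" "b < 1" "0 < e" "0 \<le> C"
  shows "(\<Sum>t=1..T. \<Sum>i\<in>UNIV. (g t $ i)\<^sup>2 / (rmsprop_v b g t $ i + e))
           \<le> real CARD('d) / (1 - b) * (ln (1 + C) - real T * ln b)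
              + ((\<Sum>i\<in>UNIV. rmsprop_v b g T $ i) / e - real CARD('d) * C) / ((1 - b) * (1 + C))"
proof -
  have coordinate: "(\<Sum>t=1..T. (g t $ i)\<^sup>2 / (rmsprop_v b g t $ i + e))
      \<le> (ln (1 + C) - real T * ln b) / (1 - b) + (rmsprop_v b g T $ i / e - C) / ((1 - b) * (1 + C))"
    for i
  proof -
    define v where "v = rmsprop_v b g T $ i"
    have v: "0 \<le> v" using assms by (simp add: v_def rmsprop_v_nonneg)
    have "ln (v + e) - ln e = ln (v + e) - ln (e * (1 + C)) + ln (1 + C)"
      using assms by (simp add: ln_mult)
    also have "\<dots> \<le> (v + e - e * (1 + C)) / (e * (1 + C)) + ln (1 + C)"
      using ln_diff_le[of "v + e" "e * (1 + C)"] v assms by simp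
    also have "\<dots> = (v / e - C) / (1 + C) + ln (1 + C)"
      using assms by (simp add: field_simps)
    finally have tangent: "ln (v + e) - ln e \<le> ln (1 + C) + (v / e - C) / (1 + C)" by simp
    have "(1 - b) * (\<Sum>t=1..T. (g t $ i)\<^sup>2 / (rmsprop_v b g t $ i + e))
        \<le> ln (v + e) - ln e - real T * ln b"
      using rmsprop_v_log_telescope[of b e g i T] assms
      by (simp add: v_def sum_distrib_left mult.assoc)
    with tangent have "(1 - b) * (\<Sum>t=1..T. (g t $ i)\<^sup>2 / (rmsprop_v b g t $ i + e))
        \<le> ln (1 + C) - real T * ln b + (v / e - C) / (1 + C)"
      by linarith
    then have "(\<Sum>t=1..T. (g t $ i)\<^sup>2 / (rmsprop_v b g t $ i + e))
        \<le> (ln (1 + C) - real T * ln b + (v / e - C) / (1 + C)) / (1 - b)"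
      using assms by (simp add: pos_le_divide_eq mult.commute)
    also have "\<dots> = (ln (1 + C) - real T * ln b) / (1 - b) + (v / e - C) / ((1 - b) * (1 + C))"
      using assms by (simp add: add_divide_distrib)
    finally show ?thesis by (simp add: v_def)
  qed
  have "(\<Sum>t=1..T. \<Sum>i\<in>UNIV. (g t $ i)\<^sup>2 / (rmsprop_v b g t $ i + e))
      = (\<Sum>i\<in>UNIV. \<Sum>t=1..T. (g t $ i)\<^sup>2 / (rmsprop_v b g t $ i + e))"
    by (rule sum.swap)
  also have "\<dots> \<le> (\<Sum>i\<in>UNIV. (ln (1 + C) - real T * ln b) / (1 - b)
                     + (rmsprop_v b g T $ i / e - C) / ((1 - b) * (1 + C)))"
    by (intro sum_mono coordinate)
  also have "\<dots> = real CARD('d) / (1 - b) * (ln (1 + C) - real T * ln b)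
              + ((\<Sum>i\<in>UNIV. rmsprop_v b g T $ i) / e - real CARD('d) * C) / ((1 - b) * (1 + C))"
    by (simp add: sum.distrib sum_subtractf sum_divide_distrib[symmetric])
  finally show ?thesis .
qed

lemma sum_rmsprop_v_Suc:
  "(\<Sum>i\<in>UNIV. rmsprop_v b g (Suc t) $ i)
     = b * (\<Sum>i\<in>UNIV. rmsprop_v b g t $ i) + (1 - b) * (norm (g (Suc t)))\<^sup>2"
  by (simp add: norm_vec_def L2_set_def sum_nonneg sum.distrib sum_distrib_left)

lemma rmsprop_v_nth_measurable:
  assumes "\<And>t. 1 \<le> t \<Longrightarrow> g t \<in> borel_measurable M"
  shows "(\<lambda>\<omega>. rmsprop_v b (\<lambda>s. g s \<omega>) t $ i) \<in> borel_measurable M"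
proof (induction t)
  case (Suc t)
  have "(\<lambda>\<omega>. g (Suc t) \<omega> $ i) \<in> borel_measurable M"
    using measurable_compose[OF assms[of "Suc t"] borel_measurable_nth] by simp
  with Suc show ?case by simp
qed simp

lemma integrable_sum_rmsprop_v:
  assumes "\<And>t. 1 \<le> t \<Longrightarrow> integrable M (\<lambda>\<omega>. (norm (g t \<omega>))\<^sup>2)"
  shows "integrable M (\<lambda>\<omega>. \<Sum>i\<in>UNIV. rmsprop_v b (\<lambda>s. g s \<omega>) t $ i)"
proof (induction t)
  case (Suc t)
  then show ?case
    using assms[of "Suc t"] unfolding sum_rmsprop_v_Suc by simp
qed simp

lemma integral_sum_rmsprop_v_le:
  assumes "0 \<le> b" "b \<le> 1"
    and "\<And>t. 1 \<le> t \<Longrightarrow> integrable M (\<lambda>\<omega>. (norm (g t \<omega>))\<^sup>2)"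
    and "\<And>t. 1 \<le> t \<Longrightarrow> (\<integral>\<omega>. (norm (g t \<omega>))\<^sup>2 \<partial>M) \<le> G\<^sup>2"
  shows "(\<integral>\<omega>. (\<Sum>i\<in>UNIV. rmsprop_v b (\<lambda>s. g s \<omega>) t $ i) \<partial>M) \<le> (1 - b ^ t) * G\<^sup>2"
proof (induction t)
  case (Suc t)
  have "(\<integral>\<omega>. (\<Sum>i\<in>UNIV. rmsprop_v b (\<lambda>s. g s \<omega>) (Suc t) $ i) \<partial>M)
      = b * (\<integral>\<omega>. (\<Sum>i\<in>UNIV. rmsprop_v b (\<lambda>s. g s \<omega>) t $ i) \<partial>M)
        + (1 - b) * (\<integral>\<omega>. (norm (g (Suc t) \<omega>))\<^sup>2 \<partial>M)"
    using assms(3)[of "Suc t"] integrable_sum_rmsprop_v[of M g b t, OF assms(3)]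
    unfolding sum_rmsprop_v_Suc by simp
  also have "\<dots> \<le> b * ((1 - b ^ t) * G\<^sup>2) + (1 - b) * G\<^sup>2"
    using Suc assms(1,2) assms(4)[of "Suc t"] by (intro add_mono mult_left_mono) auto
  also have "\<dots> = (1 - b ^ Suc t) * G\<^sup>2"
    by (simp add: algebra_simps)
  finally show ?case .
qed simp

lemma integrable_rmsprop_normalized_sq:
  assumes "0 \<le> b" "b \<le> 1" "0 < e"
    and "\<And>s. 1 \<le> s \<Longrightarrow> g s \<in> borel_measurable M"
    and "1 \<le> t" "integrable M (\<lambda>\<omega>. (norm (g t \<omega>))\<^sup>2)"
  shows "integrable M (\<lambda>\<omega>. \<Sum>i\<in>UNIV. (g t \<omega> $ i)\<^sup>2 / (rmsprop_v b (\<lambda>s. g s \<omega>) t $ i + e))"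
proof (rule Bochner_Integration.integrable_bound)
  show "integrable M (\<lambda>\<omega>. (norm (g t \<omega>))\<^sup>2 / e)"
    using assms(6) by simp
  have "(\<lambda>\<omega>. g t \<omega> $ i) \<in> borel_measurable M" for i
    using measurable_compose[OF assms(4)[OF assms(5)] borel_measurable_nth] by simp
  then show "(\<lambda>\<omega>. \<Sum>i\<in>UNIV. (g t \<omega> $ i)\<^sup>2 / (rmsprop_v b (\<lambda>s. g s \<omega>) t $ i + e)) \<in> borel_measurable M"
    using rmsprop_v_nth_measurable[OF assms(4)] by measurable
  show "AE \<omega> in M. norm (\<Sum>i\<in>UNIV. (g t \<omega> $ i)\<^sup>2 / (rmsprop_v b (\<lambda>s. g s \<omega>) t $ i + e))
          \<le> norm ((norm (g t \<omega>))\<^sup>2 / e)"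
  proof (rule AE_I2)
    fix \<omega>
    have v: "0 \<le> rmsprop_v b (\<lambda>s. g s \<omega>) t $ i" for i
      using assms by (simp add: rmsprop_v_nonneg)
    have "(\<Sum>i\<in>UNIV. (g t \<omega> $ i)\<^sup>2 / (rmsprop_v b (\<lambda>s. g s \<omega>) t $ i + e))
        \<le> (\<Sum>i\<in>UNIV. (g t \<omega> $ i)\<^sup>2 / e)"
      using v assms(3) by (intro sum_mono divide_left_mono) (auto simp: add_nonneg_pos)
    also have "\<dots> = (norm (g t \<omega>))\<^sup>2 / e"
      by (simp add: norm_vec_def L2_set_def sum_nonneg sum_divide_distrib)
    finally show "norm (\<Sum>i\<in>UNIV. (g t \<omega> $ i)\<^sup>2 / (rmsprop_v b (\<lambda>s. g s \<omega>) t $ i + e))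
          \<le> norm ((norm (g t \<omega>))\<^sup>2 / e)"
      using v assms(3) by (simp add: sum_nonneg add_nonneg_nonneg)
  qed
qed

lemma expected_rmsprop_normalized_sum_le:
  fixes M :: "'a measure" and g :: "nat \<Rightarrow> 'a \<Rightarrow> real^'d" and b e G :: real
  assumes "prob_space M" "0 < b" "b < 1" "0 < e"
    and "\<And>t. 1 \<le> t \<Longrightarrow> g t \<in> borel_measurable M"
    and "\<And>t. 1 \<le> t \<Longrightarrow> integrable M (\<lambda>\<omega>. (norm (g t \<omega>))\<^sup>2)"
    and "\<And>t. 1 \<le> t \<Longrightarrow> (\<integral>\<omega>. (norm (g t \<omega>))\<^sup>2 \<partial>M) \<le> G\<^sup>2"
  shows "(\<Sum>t=1..T. \<integral>\<omega>. (\<Sum>i\<in>UNIV. (g t \<omega> $ i)\<^sup>2 / (rmsprop_v b (\<lambda>s. g s \<omega>) t $ i + e)) \<partial>M)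
           \<le> real CARD('d) / (1 - b) * (ln (1 + (1 - b ^ T) * G\<^sup>2 / e) - real T * ln b)"
proof -
  interpret prob_space M by fact
  define C where "C = (1 - b ^ T) * G\<^sup>2 / e"
  define D where "D = real CARD('d)"
  define A where "A = D / (1 - b) * (ln (1 + C) - real T * ln b)"
  define K where "K = (1 - b) * (1 + C)"
  define S where "S \<omega> = (\<Sum>i\<in>UNIV. rmsprop_v b (\<lambda>s. g s \<omega>) T $ i)" for \<omega>
  define f where "f t \<omega> = (\<Sum>i\<in>UNIV. (g t \<omega> $ i)\<^sup>2 / (rmsprop_v b (\<lambda>s. g s \<omega>) t $ i + e))" for t \<omega>
  have C: "0 \<le> C" using assms by (simp add: C_def power_le_one)
  then have K: "0 < K" using assms by (simp add: K_def)
  have S: "integrable M S"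
    unfolding S_def using assms(6) by (rule integrable_sum_rmsprop_v)
  have f: "integrable M (f t)" if "t \<in> {1..T}" for t
    unfolding f_def using assms that by (intro integrable_rmsprop_normalized_sq) auto
  have "(\<Sum>t=1..T. integral\<^sup>L M (f t)) = (\<integral>\<omega>. (\<Sum>t=1..T. f t \<omega>) \<partial>M)"
    using f by (simp add: Bochner_Integration.integral_sum)
  also have "\<dots> \<le> (\<integral>\<omega>. A + (S \<omega> / e - D * C) / K \<partial>M)"
  proof (rule integral_mono)
    show "integrable M (\<lambda>\<omega>. \<Sum>t=1..T. f t \<omega>)"
      using f by (rule Bochner_Integration.integrable_sum)
    show "integrable M (\<lambda>\<omega>. A + (S \<omega> / e - D * C) / K)"
      using S by simp
    show "(\<Sum>t=1..T. f t \<omega>) \<le> A + (S \<omega> / e - D * C) / K" for \<omega>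
      unfolding f_def S_def A_def D_def K_def
      by (rule rmsprop_normalized_sum_le[OF assms(2-4) C])
  qed
  also have "\<dots> = A + (integral\<^sup>L M S / e - D * C) / K"
    using S by (simp add: diff_divide_distrib prob_space)
  also have "\<dots> \<le> A + (C - D * C) / K"
  proof -
    have "integral\<^sup>L M S \<le> (1 - b ^ T) * G\<^sup>2"
      unfolding S_def using assms(2,3,6,7) by (intro integral_sum_rmsprop_v_le) auto
    then show ?thesis
      using assms K by (simp add: C_def divide_right_mono pos_divide_le_eq)
  qed
  also have "\<dots> \<le> A"
    using C K by (simp add: D_def divide_nonpos_pos mult_le_cancel_right1)
  finally show ?thesis
    by (simp add: f_def[abs_def] A_def C_def D_def)
qed

theorem lemmaG5:
  fixes M :: "'a measure" and g :: "nat \<Rightarrow> 'a \<Rightarrow> real^'d"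
    and \<beta>2 \<epsilon> G :: real and T :: nat
  assumes "prob_space M"
    and "0 < \<beta>2" and "\<beta>2 < 1" and "0 < \<epsilon>"
    and "\<forall>t\<ge>1. g t \<in> borel_measurable M"
    and "\<forall>t\<ge>1. integrable M (\<lambda>\<omega>. (norm (g t \<omega>))\<^sup>2)"
    and "\<forall>t\<ge>1. (\<integral>\<omega>. (norm (g t \<omega>))\<^sup>2 \<partial>M) \<le> G\<^sup>2"
    and "T \<ge> 1"
  shows "(\<Sum>t=1..T. \<integral>\<omega>. (norm (\<chi> i. g t \<omega> $ i /
              sqrt (rmsprop_v \<beta>2 (\<lambda>s. g s \<omega>) t $ i + \<epsilon>\<^sup>2)))\<^sup>2 \<partial>M)
         \<le> real CARD('d) / (1 - \<beta>2) *
            (ln (1 + (1 - \<beta>2 ^ T) * G\<^sup>2 / \<epsilon>\<^sup>2) - real T * ln \<beta>2)"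
proof -
  have "(norm (\<chi> i. g t \<omega> $ i / sqrt (rmsprop_v \<beta>2 (\<lambda>s. g s \<omega>) t $ i + \<epsilon>\<^sup>2)))\<^sup>2
      = (\<Sum>i\<in>UNIV. (g t \<omega> $ i)\<^sup>2 / (rmsprop_v \<beta>2 (\<lambda>s. g s \<omega>) t $ i + \<epsilon>\<^sup>2))" for t \<omega>
    using assms(2,3) by (intro norm_rmsprop_normalized_sq) auto
  moreover have "0 < \<epsilon>\<^sup>2"
    using assms(4) by simp
  ultimately show ?thesis
    using expected_rmsprop_normalized_sum_le[of M \<beta>2 "\<epsilon>\<^sup>2" g G T] assms(1-3,5-7) by simp
qed

end
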